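(* Assume the Continuum Hypothesis. Then for every real number $s \in (0,1]$ there exists a Hamel basis $B$ of $\mathbb{R}$ over $\mathbb{Q}$ (that is, a subset $B \subseteq \mathbb{R}$ that is linearly independent over $\mathbb{Q}$ and whose $\mathbb{Q}$-linear span is all of $\mathbb{R}$) such that the Hausdorff dimension of $B$ satisfies $\dim_H(B) = s$.
   Context: The Continuum Hypothesis is the statement $|\mathcal{P}(\mathbb{N})| = |\mathbb{R}| = \aleph_1$, i.e., the continuum has the cardinality of the first uncountable ordinal $\omega_1$. The axiom of choice (ZFC) is assumed. $\dim_H$ denotes the Hausdorff dimension of a subset of $\mathbb{R}$. *)

theory Defs
  imports "HOL-Analysis.Analysis"
begin

text \<open>Continuum Hypothesis: the cardinality of the reals equals aleph_1,
  the cardinal successor of aleph_0 (= natLeq).\<close>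
definition continuum_hypothesis :: bool where
  "continuum_hypothesis \<longleftrightarrow> (card_of (UNIV :: real set), cardSuc natLeq) \<in> ordIso"

definition hausdorff_pre :: "real \<Rightarrow> real \<Rightarrow> real set \<Rightarrow> ennreal" where
  "hausdorff_pre s \<delta> A =
     (INF U \<in> {U :: nat \<Rightarrow> real set. A \<subseteq> (\<Union>i. U i) \<and>
                  (\<forall>i. bounded (U i) \<and> diameter (U i) \<le> \<delta>)}.
        (\<Sum>i. ennreal (diameter (U i) powr s)))"

definition hausdorff_measure :: "real \<Rightarrow> real set \<Rightarrow> ennreal" where
  "hausdorff_measure s A = (SUP \<delta> \<in> {0<..}. hausdorff_pre s \<delta> A)"

definition hausdorff_dim :: "real set \<Rightarrow> real" where
  "hausdorff_dim A = Inf {s. 0 < s \<and> hausdorff_measure s A = 0}"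

definition hamel_basis :: "real set \<Rightarrow> bool" where
  "hamel_basis B \<longleftrightarrow>
     \<not> module.dependent (\<lambda>(q::rat) (x::real). of_rat q * x) B \<and>
     module.span (\<lambda>(q::rat) (x::real). of_rat q * x) B = UNIV"

end

theory Submission
  imports Defs
begin

(*
  Let b = 2 powr (1 / s) >= 2 and let cantor_map b send a 0-1 sequence d to the sum of the
  d i / b ^ (i + 1). Its range is a self-similar Cantor set, so covering it by 2 ^ n copies of itself
  scaled by b ^ -n shows that its t-dimensional Hausdorff measure vanishes for every t > s. Points
  of this Cantor set that first differ in digit n are at distance about b ^ -n, while their binary
  counterparts under cantor_map 2 are at distance at most 2 ^ -n = (b ^ -n) powr s. Hence binary
  reading is s-Hoelder on the Cantor set, and a subset whose binary image is not Lebesgue-null has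
  positive s-dimensional Hausdorff measure.

  Under CH the reals carry a well-order in which every point has only countably many
  predecessors, and the reals can index all sequences of rational intervals. By transfinite
  recursion, at stage i pick a point of the Cantor set outside the Q-span of the earlier choices
  whose binary image escapes the i-th sequence of intervals if that sequence has total length < 1.
  This is possible because the unit interval minus a set of measure < 1 is uncountable. The chosen
  points are Q-independent; extending them within the union of the Cantor set and the range of
  cantor_map m, where m > b is an integer so that base-m digits make this union span R over Q,
  gives a Hamel basis of Hausdorff dimension exactly s.
*)

section \<open>Well-orders with countable initial segments\<close>

lemma wf_total_countable_predecessors:
  assumes "(card_of (UNIV :: 'a set), cardSuc natLeq) \<in> ordLeq"
  obtains R :: "('a \<times> 'a) set" where "wf R" and "\<And>x y. x \<noteq> y \<Longrightarrow> (x, y) \<in> R \<or> (y, x) \<in> R"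
    and "\<And>x. countable {y. (y, x) \<in> R}"
proof
  let ?r = "card_of (UNIV :: 'a set)"
  have wo: "Well_order ?r"
    by (rule card_of_Well_order)
  have field: "Field ?r = UNIV"
    by (rule Field_card_of)
  show "wf (?r - Id)"
    using wo unfolding order_on_defs by blast
  show "(x, y) \<in> ?r - Id \<or> (y, x) \<in> ?r - Id" if "x \<noteq> y" for x y
    using wo field that unfolding order_on_defs total_on_def by auto
  show "countable {y. (y, x) \<in> ?r - Id}" for x
  proof -
    have "(card_of (underS ?r x), ?r) \<in> ordLess"
      by (rule card_of_underS) (simp_all add: field card_of_card_order_on)
    then have "(card_of (underS ?r x), cardSuc natLeq) \<in> ordLess"
      using assms by (rule ordLess_ordLeq_trans)
    then have "(card_of (underS ?r x), natLeq) \<in> ordLeq"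
      using cardSuc_ordLeq_ordLess[OF natLeq_Card_order card_of_Card_order] by blast
    then have "(card_of (underS ?r x), card_of (UNIV :: nat set)) \<in> ordLeq"
      using card_of_nat ordLeq_ordIso_trans ordIso_symmetric by blast
    then have "countable (underS ?r x)"
      unfolding countable_def card_of_ordLeq[symmetric] by auto
    then show ?thesis
      by (simp add: underS_def conj_commute)
  qed
qed

lemma wf_finite_has_maximal:
  assumes "wf R" and "finite A" and "A \<noteq> {}"
  obtains m where "m \<in> A" and "\<forall>j\<in>A. (m, j) \<notin> R"
proof -
  have wf: "wf ((R \<inter> A \<times> A)\<inverse>)"
    using assms(2) by (intro finite_acyclic_wf_converse acyclic_subset[OF wf_acyclic[OF assms(1)]]) auto
  obtain x where "x \<in> A"
    using assms(3) by blast
  then obtain m where "m \<in> A" and "\<And>j. (j, m) \<in> (R \<inter> A \<times> A)\<inverse> \<Longrightarrow> j \<notin> A"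
    by (rule wfE_min[OF wf]) blast
  then show ?thesis
    using that by blast
qed

lemma wf_rec_choice:
  assumes "wf R" and step: "\<And>i f. \<exists>x. P i (f ` {j. (j, i) \<in> R}) x"
  obtains f where "\<And>i. P i (f ` {j. (j, i) \<in> R}) (f i)"
proof -
  define sel where "sel h i = (SOME x. P i (h ` {j. (j, i) \<in> R}) x)" for h i
  define f where "f = wfrec R sel"
  have "P i (f ` {j. (j, i) \<in> R}) (f i)" for i
  proof -
    have "f i = sel (cut f R i) i"
      unfolding f_def by (rule wfrec[OF assms(1)])
    moreover have "cut f R i ` {j. (j, i) \<in> R} = f ` {j. (j, i) \<in> R}"
      by (auto simp: cut_apply)
    ultimately have "f i = (SOME x. P i (f ` {j. (j, i) \<in> R}) x)"
      unfolding sel_def by simp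
    then show ?thesis
      using someI_ex[OF step] by simp
  qed
  then show ?thesis
    using that by blast
qed

section \<open>Digit maps\<close>

definition cantor_map :: "real \<Rightarrow> (nat \<Rightarrow> bool) \<Rightarrow> real" where
  "cantor_map b d = (\<Sum>i. of_bool (d i) / b ^ Suc i)"

lemma sums_inverse_powers:
  fixes b :: real
  assumes "1 < b"
  shows "(\<lambda>i. 1 / b ^ Suc i) sums (1 / (b - 1))"
proof -
  have "(\<lambda>i. (1 / b) * (1 / b) ^ i) sums ((1 / b) * (1 / (1 - 1 / b)))"
    using assms by (intro sums_mult geometric_sums) auto
  moreover have "(1 / b) * (1 / (1 - 1 / b)) = 1 / (b - 1)"
    using assms by (simp add: field_simps)
  ultimately show ?thesis
    by (simp add: power_one_over)
qed

lemma summable_cantor_map: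
  fixes b :: real
  assumes "1 < b"
  shows "summable (\<lambda>i. of_bool (d i) / b ^ Suc i)"
proof (rule summable_comparison_test'[OF sums_summable[OF sums_inverse_powers[OF assms]]])
  show "norm (of_bool (d n) / b ^ Suc n) \<le> 1 / b ^ Suc n" for n
    using assms by (cases "d n") simp_all
qed

lemma cantor_map_bounds:
  fixes b :: real
  assumes "1 < b"
  shows "0 \<le> cantor_map b d" and "cantor_map b d \<le> 1 / (b - 1)"
proof -
  show "0 \<le> cantor_map b d"
    unfolding cantor_map_def using assms by (intro suminf_nonneg summable_cantor_map) auto
  have "cantor_map b d \<le> (\<Sum>i. 1 / b ^ Suc i)"
    unfolding cantor_map_def using assms sums_summable[OF sums_inverse_powers[OF assms]]
    by (intro suminf_le summable_cantor_map) (auto simp: divide_right_mono)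
  then show "cantor_map b d \<le> 1 / (b - 1)"
    using sums_unique[OF sums_inverse_powers[OF assms]] by simp
qed

lemma cantor_map_Suc:
  fixes b :: real
  assumes "1 < b"
  shows "cantor_map b d = (of_bool (d 0) + cantor_map b (\<lambda>i. d (Suc i))) / b"
proof -
  let ?f = "\<lambda>i. of_bool (d i) / b ^ Suc i"
  have tail: "(\<lambda>i. ?f (Suc i)) sums (cantor_map b d - ?f 0)"
    using sums_Suc_iff[of ?f "cantor_map b d - ?f 0"] summable_cantor_map[OF assms]
    unfolding cantor_map_def by (simp add: summable_sums)
  have "(\<lambda>i. of_bool (d (Suc i)) / b ^ Suc i / b) sums (cantor_map b (\<lambda>i. d (Suc i)) / b)"
    unfolding cantor_map_def by (intro sums_divide summable_sums summable_cantor_map assms)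
  then have "(\<lambda>i. ?f (Suc i)) sums (cantor_map b (\<lambda>i. d (Suc i)) / b)"
    by (simp add: mult_ac)
  with tail show ?thesis
    using assms by (auto simp: field_simps dest: sums_unique2)
qed

lemma cantor_map_diff_shift:
  fixes b :: real
  assumes "1 < b" and "\<forall>i<n. d i = d' i"
  shows "cantor_map b d - cantor_map b d' =
           (cantor_map b (\<lambda>i. d (i + n)) - cantor_map b (\<lambda>i. d' (i + n))) / b ^ n"
  using assms(2)
proof (induction n)
  case 0
  then show ?case by simp
next
  case (Suc n)
  have "cantor_map b (\<lambda>i. d (i + n)) - cantor_map b (\<lambda>i. d' (i + n)) =
          (cantor_map b (\<lambda>i. d (i + Suc n)) - cantor_map b (\<lambda>i. d' (i + Suc n))) / b"
    using cantor_map_Suc[OF assms(1), of "\<lambda>i. d (i + n)"]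
      cantor_map_Suc[OF assms(1), of "\<lambda>i. d' (i + n)"] Suc.prems
    by (simp add: diff_divide_distrib[symmetric])
  with Suc show ?case
    by simp
qed

lemma abs_cantor_map_diff_le:
  fixes b :: real
  assumes "1 < b"
  shows "\<bar>cantor_map b d - cantor_map b d'\<bar> \<le> 1 / (b - 1)"
  using cantor_map_bounds[OF assms, of d] cantor_map_bounds[OF assms, of d'] by linarith

lemma cantor_map_diff_first_digit:
  fixes b :: real
  assumes "1 < b" and "d 0 \<noteq> d' 0"
  shows "(b - 2) / (b - 1) \<le> b * \<bar>cantor_map b d - cantor_map b d'\<bar>"
proof -
  let ?u = "cantor_map b (\<lambda>i. d (Suc i))" and ?u' = "cantor_map b (\<lambda>i. d' (Suc i))"
  have "b * (cantor_map b d - cantor_map b d') = (of_bool (d 0) - of_bool (d' 0)) + (?u - ?u')"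
    using cantor_map_Suc[OF assms(1), of d] cantor_map_Suc[OF assms(1), of d'] assms(1)
    by (simp add: field_simps)
  moreover have "\<bar>of_bool (d 0) - of_bool (d' 0) :: real\<bar> = 1"
    using assms(2) by auto
  moreover have "\<bar>?u - ?u'\<bar> \<le> 1 / (b - 1)"
    by (rule abs_cantor_map_diff_le[OF assms(1)])
  ultimately have "1 - 1 / (b - 1) \<le> \<bar>b * (cantor_map b d - cantor_map b d')\<bar>"
    by (smt (verit))
  then have "1 - 1 / (b - 1) \<le> b * \<bar>cantor_map b d - cantor_map b d'\<bar>"
    using assms(1) by (simp add: abs_mult)
  moreover have "1 - 1 / (b - 1) = (b - 2) / (b - 1)"
    using assms(1) by (simp add: field_simps)
  ultimately show ?thesis
    by linarith
qed

lemma cantor_map_diff_bounds: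
  fixes b :: real
  assumes "1 < b" and "\<forall>i<n. d i = d' i" and "d n \<noteq> d' n"
  shows "(b - 2) / (b - 1) \<le> b ^ Suc n * \<bar>cantor_map b d - cantor_map b d'\<bar>"
    and "b ^ n * \<bar>cantor_map b d - cantor_map b d'\<bar> \<le> 1 / (b - 1)"
proof -
  have eq: "b ^ n * \<bar>cantor_map b d - cantor_map b d'\<bar> =
              \<bar>cantor_map b (\<lambda>i. d (i + n)) - cantor_map b (\<lambda>i. d' (i + n))\<bar>"
    using cantor_map_diff_shift[OF assms(1,2)] assms(1) by (simp add: abs_mult)
  show "(b - 2) / (b - 1) \<le> b ^ Suc n * \<bar>cantor_map b d - cantor_map b d'\<bar>"
    using eq cantor_map_diff_first_digit[OF assms(1), of "\<lambda>i. d (i + n)" "\<lambda>i. d' (i + n)"] assms(3)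
    by (simp add: mult.assoc)
  show "b ^ n * \<bar>cantor_map b d - cantor_map b d'\<bar> \<le> 1 / (b - 1)"
    unfolding eq by (rule abs_cantor_map_diff_le[OF assms(1)])
qed

lemma first_difference:
  fixes f g :: "nat \<Rightarrow> 'a"
  assumes "f \<noteq> g"
  obtains n where "\<forall>i<n. f i = g i" and "f n \<noteq> g n"
  using assms exists_least_iff[of "\<lambda>n :: nat. f n \<noteq> g n"] by (auto simp: fun_eq_iff)

lemma inj_cantor_map:
  fixes b :: real
  assumes "2 < b"
  shows "inj (cantor_map b)"
proof (rule injI, rule ccontr)
  fix d d' assume eq: "cantor_map b d = cantor_map b d'" and "d \<noteq> d'"
  obtain n where "\<forall>i<n. d i = d' i" and "d n \<noteq> d' n"
    using \<open>d \<noteq> d'\<close> by (rule first_difference)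
  then have "(b - 2) / (b - 1) \<le> 0"
    using cantor_map_diff_bounds(1)[of b n d d'] assms eq by simp
  then show False
    using assms by (simp add: divide_le_0_iff)
qed

lemma cantor_map_binary_diff_le:
  fixes b s :: real
  assumes b: "2 < b" and bs: "b powr s = 2"
  shows "\<bar>cantor_map 2 d - cantor_map 2 d'\<bar>
           \<le> 2 * ((b - 2) / (b - 1)) powr - s * \<bar>cantor_map b d - cantor_map b d'\<bar> powr s"
proof (cases "d = d'")
  case False
  define \<kappa> where "\<kappa> = (b - 2) / (b - 1)"
  have \<kappa>: "0 < \<kappa>"
    unfolding \<kappa>_def using b by simp
  have s: "0 < s"
    using bs b powr_less_one[of b s] by (cases "s = 0") force+
  obtain n where "\<forall>i<n. d i = d' i" and "d n \<noteq> d' n"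
    using False by (rule first_difference)
  note bounds = cantor_map_diff_bounds[OF _ this]
  have "b ^ Suc n = b powr real (Suc n)"
    by (rule powr_realpow[symmetric]) (use b in simp)
  then have "(b ^ Suc n) powr s = (b powr s) ^ Suc n"
    using b by (subst powr_power) (auto simp: powr_powr)
  then have eq: "1 / 2 ^ n = 2 * \<kappa> powr - s * (\<kappa> / b ^ Suc n) powr s"
    using \<kappa> b bs by (simp add: powr_divide powr_minus field_simps)
  have "\<bar>cantor_map 2 d - cantor_map 2 d'\<bar> \<le> 1 / 2 ^ n"
    using bounds(2)[of 2] by (simp add: pos_le_divide_eq mult.commute)
  also have "\<dots> \<le> 2 * \<kappa> powr - s * \<bar>cantor_map b d - cantor_map b d'\<bar> powr s"
    unfolding eq using bounds(1)[of b] b \<kappa> s unfolding \<kappa>_def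
    by (intro mult_left_mono powr_mono2) (auto simp: field_simps)
  finally show ?thesis
    unfolding \<kappa>_def .
qed simp

lemma cantor_map_holder:
  fixes b s :: real
  assumes "2 \<le> b" and "b powr s = 2"
  shows "\<exists>C>0. \<forall>d d'. \<bar>cantor_map 2 d - cantor_map 2 d'\<bar> \<le> C * \<bar>cantor_map b d - cantor_map b d'\<bar> powr s"
proof (cases "b = 2")
  case True
  then have "s = 1"
    using assms(2) powr_inj[of 2 s 1] by simp
  with True show ?thesis
    by (intro exI[of _ 1]) simp
next
  case False
  then have "2 < b"
    using assms(1) by simp
  then show ?thesis
    using cantor_map_binary_diff_le[OF _ assms(2)]
    by (intro exI[of _ "2 * ((b - 2) / (b - 1)) powr - s"]) simp
qed

lemma LIMSEQ_floor_mult_power_div_power: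
  fixes x b :: real
  assumes "1 < b"
  shows "(\<lambda>n. \<lfloor>x * b ^ n\<rfloor> / b ^ n) \<longlonglongrightarrow> x"
proof (rule tendsto_sandwich[OF _ _ _ tendsto_const])
  have "x * b ^ n - 1 \<le> \<lfloor>x * b ^ n\<rfloor>" and "\<lfloor>x * b ^ n\<rfloor> \<le> x * b ^ n" for n
    by linarith+
  moreover have "x - 1 / b ^ n = (x * b ^ n - 1) / b ^ n" for n
    using assms by (simp add: diff_divide_distrib)
  ultimately have "x - 1 / b ^ n \<le> \<lfloor>x * b ^ n\<rfloor> / b ^ n" and "\<lfloor>x * b ^ n\<rfloor> / b ^ n \<le> x" for n
    using assms by (simp_all add: divide_right_mono pos_divide_le_eq)
  then show "eventually (\<lambda>n. x - 1 / b ^ n \<le> \<lfloor>x * b ^ n\<rfloor> / b ^ n) sequentially"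
    and "eventually (\<lambda>n. \<lfloor>x * b ^ n\<rfloor> / b ^ n \<le> x) sequentially"
    by (simp_all add: always_eventually)
  have "(\<lambda>n. x - 1 / b ^ n) \<longlonglongrightarrow> x - 0"
    using assms by (intro tendsto_diff tendsto_const LIMSEQ_divide_realpow_zero)
  then show "(\<lambda>n. x - 1 / b ^ n) \<longlonglongrightarrow> x"
    by simp
qed

lemma floor_mult_power_Suc:
  fixes x :: real
  assumes "0 < m"
  shows "\<lfloor>x * real m ^ Suc n\<rfloor> = int m * \<lfloor>x * real m ^ n\<rfloor> + \<lfloor>x * real m ^ Suc n\<rfloor> mod int m"
proof -
  have "\<lfloor>x * real m ^ Suc n\<rfloor> div int m = \<lfloor>x * real m ^ Suc n / real_of_int (int m)\<rfloor>"
    by (rule floor_divide_real_eq_div[symmetric]) simp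
  also have "\<dots> = \<lfloor>x * real m ^ n\<rfloor>"
    using assms by simp
  finally show ?thesis
    using div_mult_mod_eq[of "\<lfloor>x * real m ^ Suc n\<rfloor>" "int m"] by (simp add: mult.commute)
qed

lemma base_digits_exist:
  fixes x :: real
  assumes m: "2 \<le> m" and x: "0 \<le> x" "x < 1"
  obtains e :: "nat \<Rightarrow> nat" where "\<forall>i. e i < m" and "(\<lambda>i. real (e i) / real m ^ Suc i) sums x"
proof
  define F where "F n = \<lfloor>x * real m ^ n\<rfloor>" for n
  define e where "e i = nat (F (Suc i) mod m)" for i
  show "\<forall>i. e i < m"
    unfolding e_def using m by (simp add: nat_less_iff)
  have "F (Suc n) = int m * F n + int (e n)" for n
    unfolding F_def e_def using floor_mult_power_Suc[of m x n] m by simp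
  then have F_Suc: "real_of_int (F (Suc n)) = real m * real_of_int (F n) + real (e n)" for n
    by (metis of_int_add of_int_mult of_int_of_nat_eq)
  have partial_sums: "(\<Sum>i<n. real (e i) / real m ^ Suc i) = real_of_int (F n) / real m ^ n" for n
  proof (induction n)
    case 0
    then show ?case
      using x by (simp add: F_def floor_eq_iff)
  next
    case (Suc n)
    have "(\<Sum>i<Suc n. real (e i) / real m ^ Suc i) =
            real_of_int (F n) / real m ^ n + real (e n) / real m ^ Suc n"
      using Suc by simp
    also have "\<dots> = (real m * real_of_int (F n) + real (e n)) / real m ^ Suc n"
      using m by (simp add: field_simps)
    finally show ?case
      by (simp add: F_Suc)
  qed
  show "(\<lambda>i. real (e i) / real m ^ Suc i) sums x"
    unfolding sums_def partial_sums F_def using m by (intro LIMSEQ_floor_mult_power_div_power) simp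
qed

lemma range_binary_cantor_map: "{0..<1} \<subseteq> range (cantor_map 2)"
proof
  fix x :: real assume "x \<in> {0..<1}"
  then obtain e where e: "\<forall>i. e i < 2" "(\<lambda>i. real (e i) / real 2 ^ Suc i) sums x"
    by (rule_tac base_digits_exist[of 2 x]) auto
  have "real (e i) = of_bool (e i = 1)" for i
    using e(1) less_2_cases[of "e i"] by auto
  then have "(\<lambda>i. of_bool (e i = 1) / 2 ^ Suc i) sums x"
    using e(2) by simp
  then have "x = cantor_map 2 (\<lambda>i. e i = 1)"
    unfolding cantor_map_def by (rule sums_unique)
  then show "x \<in> range (cantor_map 2)"
    by blast
qed

section \<open>The reals as a vector space over the rationals\<close>

interpretation Q: vector_space "\<lambda>(q::rat) (x::real). of_rat q * x"
  by unfold_locales (simp_all add: algebra_simps of_rat_add of_rat_mult)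

lemma (in vector_space) countable_span:
  assumes "countable (UNIV :: 'a set)" and "countable S"
  shows "countable (span S)"
proof -
  let ?comb = "\<lambda>xs. sum_list (map (\<lambda>(c, v). scale c v) xs)"
  have "span S \<subseteq> ?comb ` lists (UNIV \<times> S)"
  proof
    fix y assume "y \<in> span S"
    then obtain t r where t: "finite t" "t \<subseteq> S" and y: "y = (\<Sum>v\<in>t. scale (r v) v)"
      unfolding span_explicit by blast
    obtain vs where vs: "set vs = t" "distinct vs"
      using finite_distinct_list[OF t(1)] by blast
    have "y = ?comb (map (\<lambda>v. (r v, v)) vs)"
      using vs by (simp add: y sum_list_distinct_conv_sum_set o_def)
    moreover have "map (\<lambda>v. (r v, v)) vs \<in> lists (UNIV \<times> S)"
      using vs t(2) by auto
    ultimately show "y \<in> ?comb ` lists (UNIV \<times> S)"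
      by blast
  qed
  moreover have "countable (?comb ` lists (UNIV \<times> S))"
    using assms by simp
  ultimately show ?thesis
    by (rule countable_subset)
qed

lemma (in vector_space) independent_range_if_notin_span_predecessors:
  fixes y :: "'i \<Rightarrow> 'b"
  assumes "wf R" and total: "\<And>i j. i \<noteq> j \<Longrightarrow> (i, j) \<in> R \<or> (j, i) \<in> R"
    and notin: "\<And>i. y i \<notin> span (y ` {j. (j, i) \<in> R})"
  shows "independent (range y)"
proof
  assume "dependent (range y)"
  then obtain t u where t: "finite t" "t \<subseteq> range y" "(\<Sum>v\<in>t. scale (u v) v) = 0"
    and nonzero: "\<exists>v\<in>t. u v \<noteq> 0"
    unfolding dependent_explicit by blast
  define S where "S = {v\<in>t. u v \<noteq> 0}"
  obtain J where J: "finite J" "S = y ` J"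
    using finite_subset_image[of S y UNIV] t(1,2) unfolding S_def by auto
  obtain m where m: "m \<in> J" "\<forall>j\<in>J. (m, j) \<notin> R"
    using wf_finite_has_maximal[OF assms(1) J(1)] J(2) nonzero unfolding S_def by auto
  define w where "w = y m"
  have w: "w \<in> t" "u w \<noteq> 0"
    using m(1) J(2) unfolding S_def w_def by auto
  have "scale (u v) v \<in> span (y ` {j. (j, m) \<in> R})" if v: "v \<in> t - {w}" for v
  proof (cases "u v = 0")
    case False
    then obtain j where "j \<in> J" "v = y j"
      using v J(2) unfolding S_def by auto
    then have "(j, m) \<in> R"
      using v total[of j m] m(2) unfolding w_def by auto
    then show ?thesis
      using \<open>v = y j\<close> by (intro span_scale span_base) auto
  qed (simp add: span_zero)
  then have "(\<Sum>v\<in>t - {w}. scale (u v) v) \<in> span (y ` {j. (j, m) \<in> R})"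
    by (rule span_sum)
  moreover have "scale (u w) w = - (\<Sum>v\<in>t - {w}. scale (u v) v)"
    using t(1,3) w(1) by (simp add: sum.remove eq_neg_iff_add_eq_0)
  ultimately have "scale (u w) w \<in> span (y ` {j. (j, m) \<in> R})"
    by (metis span_neg)
  then have "w \<in> span (y ` {j. (j, m) \<in> R})"
    using span_scale[of "scale (u w) w" _ "inverse (u w)"] w(2) by simp
  then show False
    using notin[of m] unfolding w_def by simp
qed

lemma span_range_cantor_map:
  assumes "2 \<le> m"
  shows "Q.span (range (cantor_map (real m))) = UNIV"
proof -
  let ?S = "Q.span (range (cantor_map (real m)))"
  have unit: "x \<in> ?S" if x: "0 \<le> x" "x < 1" for x
  proof -
    obtain e where e: "\<forall>i. e i < m" "(\<lambda>i. real (e i) / real m ^ Suc i) sums x"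
      by (rule base_digits_exist[OF assms x])
    have digit: "real (e i) = (\<Sum>j\<in>{1..m - 1}. of_bool (j \<le> e i))" for i
    proof -
      have "{1..m - 1} \<inter> {j. j \<le> e i} = {1..e i}"
        using spec[OF e(1), of i] by auto
      then show ?thesis
        by simp
    qed
    have "(\<lambda>i. \<Sum>j\<in>{1..m - 1}. of_bool (j \<le> e i) / real m ^ Suc i) sums x"
      using e(2) unfolding digit sum_divide_distrib .
    then have "x = (\<Sum>i. \<Sum>j\<in>{1..m - 1}. of_bool (j \<le> e i) / real m ^ Suc i)"
      by (rule sums_unique)
    also have "\<dots> = (\<Sum>j\<in>{1..m - 1}. cantor_map (real m) (\<lambda>i. j \<le> e i))"
      unfolding cantor_map_def using assms by (intro suminf_sum summable_cantor_map) auto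
    finally show "x \<in> ?S"
      by (simp add: Q.span_sum Q.span_base)
  qed
  have "r \<in> ?S" for r
  proof -
    have "frac r + of_rat (of_int (2 * \<lfloor>r\<rfloor>)) * (1 / 2) \<in> ?S"
      using unit[of "frac r"] unit[of "1 / 2"] by (intro Q.span_add Q.span_scale) (auto simp: frac_lt_1)
    then show ?thesis
      by (simp add: frac_def of_rat_mult)
  qed
  then show ?thesis
    by auto
qed

section \<open>Hausdorff measure via finite covers\<close>

definition fin_cover_bound :: "real \<Rightarrow> real \<Rightarrow> real set \<Rightarrow> real \<Rightarrow> bool" where
  "fin_cover_bound s \<delta> A S \<longleftrightarrow>
     (\<exists>\<U>. finite \<U> \<and> A \<subseteq> \<Union>\<U> \<and> (\<forall>U\<in>\<U>. bounded U \<and> diameter U \<le> \<delta>) \<and>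
          (\<Sum>U\<in>\<U>. diameter U powr s) \<le> S)"

lemma fin_cover_bound_mono:
  "fin_cover_bound s \<delta> A S \<Longrightarrow> B \<subseteq> A \<Longrightarrow> \<delta> \<le> \<delta>' \<Longrightarrow> S \<le> S' \<Longrightarrow> fin_cover_bound s \<delta>' B S'"
  unfolding fin_cover_bound_def by (meson order_trans subset_trans)

lemma fin_cover_bound_Un:
  assumes "fin_cover_bound s \<delta> A S" and "fin_cover_bound s \<delta> B S'"
  shows "fin_cover_bound s \<delta> (A \<union> B) (S + S')"
proof -
  obtain \<U> where \<U>: "finite \<U>" "A \<subseteq> \<Union>\<U>" "\<forall>U\<in>\<U>. bounded U \<and> diameter U \<le> \<delta>"
    "(\<Sum>U\<in>\<U>. diameter U powr s) \<le> S"
    using assms(1) unfolding fin_cover_bound_def by blast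
  obtain \<V> where \<V>: "finite \<V>" "B \<subseteq> \<Union>\<V>" "\<forall>U\<in>\<V>. bounded U \<and> diameter U \<le> \<delta>"
    "(\<Sum>U\<in>\<V>. diameter U powr s) \<le> S'"
    using assms(2) unfolding fin_cover_bound_def by blast
  have "(\<Sum>U\<in>\<U> \<union> \<V>. diameter U powr s) \<le> (\<Sum>U\<in>\<U>. diameter U powr s) + (\<Sum>U\<in>\<V>. diameter U powr s)"
    using \<U>(1) \<V>(1) by (simp add: sum_Un sum_nonneg)
  then show ?thesis
    unfolding fin_cover_bound_def using \<U> \<V>
    by (intro exI[of _ "\<U> \<union> \<V>"]) auto
qed

lemma diameter_affine_image_le:
  fixes U :: "real set"
  assumes "bounded U" and "0 < b"
  shows "bounded ((\<lambda>x. (x + a) / b) ` U)" and "diameter ((\<lambda>x. (x + a) / b) ` U) \<le> diameter U / b"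
proof -
  have eq: "(\<lambda>x. (x + a) / b) ` U = (\<lambda>x. a / b + x) ` (\<lambda>x. (1 / b) *\<^sub>R x) ` U"
    by (auto simp: image_image add_divide_distrib)
  show "bounded ((\<lambda>x. (x + a) / b) ` U)"
    unfolding eq using assms(1) by (intro bounded_translation bounded_scaling)
  show "diameter ((\<lambda>x. (x + a) / b) ` U) \<le> diameter U / b"
  proof (rule diameter_le)
    show "(\<lambda>x. (x + a) / b) ` U \<noteq> {} \<or> 0 \<le> diameter U / b"
      using assms(2) diameter_ge_0[OF assms(1)] by simp
    fix x y assume "x \<in> (\<lambda>x. (x + a) / b) ` U" and "y \<in> (\<lambda>x. (x + a) / b) ` U"
    then obtain x' y' where "x' \<in> U" "y' \<in> U" and xy: "x = (x' + a) / b" "y = (y' + a) / b"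
      by blast
    then have "\<bar>x' - y'\<bar> \<le> diameter U"
      using diameter_bounded_bound[OF assms(1)] by (simp add: dist_real_def)
    moreover have "norm (x - y) = \<bar>x' - y'\<bar> / b"
      using assms(2) by (simp add: xy diff_divide_distrib[symmetric])
    ultimately show "norm (x - y) \<le> diameter U / b"
      using assms(2) by (simp add: divide_right_mono)
  qed
qed

lemma fin_cover_bound_affine_image:
  assumes "fin_cover_bound s \<delta> A S" and "0 < b" and "0 < s"
  shows "fin_cover_bound s (\<delta> / b) ((\<lambda>x. (x + a) / b) ` A) (S / b powr s)"
proof -
  let ?f = "\<lambda>x :: real. (x + a) / b"
  obtain \<U> where \<U>: "finite \<U>" "A \<subseteq> \<Union>\<U>" "\<forall>U\<in>\<U>. bounded U \<and> diameter U \<le> \<delta>"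
    "(\<Sum>U\<in>\<U>. diameter U powr s) \<le> S"
    using assms(1) unfolding fin_cover_bound_def by blast
  note image = diameter_affine_image_le[OF _ assms(2), of _ a]
  have "(\<Sum>V\<in>(`) ?f ` \<U>. diameter V powr s) \<le> (\<Sum>U\<in>\<U>. diameter (?f ` U) powr s)"
    using \<U>(1) by (rule sum_image_le[unfolded o_def]) simp
  also have "\<dots> \<le> (\<Sum>U\<in>\<U>. (diameter U / b) powr s)"
    using \<U>(3) image assms(3) by (intro sum_mono powr_mono2) (auto simp: diameter_ge_0)
  also have "\<dots> = (\<Sum>U\<in>\<U>. diameter U powr s) / b powr s"
    using \<U>(3) assms(2) by (simp add: powr_divide diameter_ge_0 sum_divide_distrib)
  also have "\<dots> \<le> S / b powr s"
    using \<U>(4) by (simp add: divide_right_mono)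
  moreover have "?f ` A \<subseteq> \<Union>((`) ?f ` \<U>)"
    using \<U>(2) by blast
  moreover have "bounded (?f ` U) \<and> diameter (?f ` U) \<le> \<delta> / b" if "U \<in> \<U>" for U
    using \<U>(3) that image[of U] divide_right_mono[of "diameter U" \<delta> b] assms(2) by auto
  ultimately show ?thesis
    unfolding fin_cover_bound_def using \<U>(1) by (intro exI[of _ "(`) ?f ` \<U>"]) auto
qed

lemma fin_cover_bound_range_cantor_map_level:
  fixes b s :: real
  assumes "1 < b" and "0 < s"
  shows "fin_cover_bound s (1 / (b - 1) / b ^ n) (range (cantor_map b))
           ((1 / (b - 1)) powr s * (2 / b powr s) ^ n)"
proof (induction n)
  case 0
  have "range (cantor_map b) \<subseteq> {0..1 / (b - 1)}"
    using cantor_map_bounds[OF assms(1)] by auto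
  then show ?case
    unfolding fin_cover_bound_def using assms(1) by (intro exI[of _ "{{0..1 / (b - 1)}}"]) auto
next
  case (Suc n)
  let ?Y = "range (cantor_map b)" and ?K = "(1 / (b - 1)) powr s * (2 / b powr s) ^ n"
  have sub: "?Y \<subseteq> (\<lambda>x. (x + 0) / b) ` ?Y \<union> (\<lambda>x. (x + 1) / b) ` ?Y"
  proof
    fix y assume "y \<in> ?Y"
    then obtain d where "y = (of_bool (d 0) + cantor_map b (\<lambda>i. d (Suc i))) / b"
      using cantor_map_Suc[OF assms(1)] by blast
    then show "y \<in> (\<lambda>x. (x + 0) / b) ` ?Y \<union> (\<lambda>x. (x + 1) / b) ` ?Y"
      by (cases "d 0") auto
  qed
  have cov: "fin_cover_bound s (1 / (b - 1) / b ^ n / b)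
      ((\<lambda>x. (x + 0) / b) ` ?Y \<union> (\<lambda>x. (x + 1) / b) ` ?Y) (?K / b powr s + ?K / b powr s)"
    using Suc.IH assms by (intro fin_cover_bound_Un fin_cover_bound_affine_image) auto
  have "fin_cover_bound s (1 / (b - 1) / b ^ n / b) ?Y
      ((1 / (b - 1)) powr s * (2 / b powr s) ^ Suc n)"
    by (rule fin_cover_bound_mono[OF cov sub order_refl]) (simp add: field_simps)
  then show ?case
    by (simp add: mult_ac)
qed

lemma fin_cover_bound_range_cantor_map:
  fixes b s :: real
  assumes "1 < b" and "0 < s" and "2 < b powr s" and "0 < \<delta>" and "0 < \<epsilon>"
  shows "fin_cover_bound s \<delta> (range (cantor_map b)) \<epsilon>"
proof -
  have "(\<lambda>n. 1 / (b - 1) / b ^ n) \<longlonglongrightarrow> 0"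
    using LIMSEQ_divide_realpow_zero[OF assms(1), of "1 / (b - 1)"] by simp
  moreover have "(\<lambda>n. (1 / (b - 1)) powr s * (2 / b powr s) ^ n) \<longlonglongrightarrow> 0"
    using assms(1,3) by (intro tendsto_mult_right_zero LIMSEQ_power_zero) simp
  ultimately have "eventually (\<lambda>n. 1 / (b - 1) / b ^ n < \<delta> \<and>
      (1 / (b - 1)) powr s * (2 / b powr s) ^ n < \<epsilon>) sequentially"
    using assms(4,5) by (intro eventually_conj order_tendstoD(2)) auto
  then obtain n where "1 / (b - 1) / b ^ n < \<delta>" and "(1 / (b - 1)) powr s * (2 / b powr s) ^ n < \<epsilon>"
    using eventually_happens'[OF sequentially_bot] by blast
  then show ?thesis
    by (intro fin_cover_bound_mono[OF fin_cover_bound_range_cantor_map_level[OF assms(1,2), of n]]) auto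
qed

lemma hausdorff_pre_le_fin_cover_bound:
  assumes "0 \<le> \<delta>" and "fin_cover_bound s \<delta> A S"
  shows "hausdorff_pre s \<delta> A \<le> ennreal S"
proof -
  obtain \<U> where \<U>: "finite \<U>" "A \<subseteq> \<Union>\<U>" "\<forall>U\<in>\<U>. bounded U \<and> diameter U \<le> \<delta>"
    "(\<Sum>U\<in>\<U>. diameter U powr s) \<le> S"
    using assms(2) unfolding fin_cover_bound_def by blast
  obtain h where h: "bij_betw h {0..<card \<U>} \<U>"
    using ex_bij_betw_nat_finite[OF \<U>(1)] by blast
  define U where "U i = (if i < card \<U> then h i else {})" for i
  have "\<Union>\<U> \<subseteq> (\<Union>i. U i)"
    using h unfolding U_def bij_betw_def by force
  moreover have "h i \<in> \<U>" if "i < card \<U>" for i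
    using h that unfolding bij_betw_def by auto
  ultimately have "U \<in> {U. A \<subseteq> (\<Union>i. U i) \<and> (\<forall>i. bounded (U i) \<and> diameter (U i) \<le> \<delta>)}"
    using \<U>(2,3) assms(1) unfolding U_def by auto
  then have "hausdorff_pre s \<delta> A \<le> (\<Sum>i. ennreal (diameter (U i) powr s))"
    unfolding hausdorff_pre_def by (rule INF_lower)
  also have "\<dots> = (\<Sum>i<card \<U>. ennreal (diameter (U i) powr s))"
    by (rule suminf_finite) (auto simp: U_def)
  also have "\<dots> = ennreal (\<Sum>i\<in>{0..<card \<U>}. diameter (h i) powr s)"
    by (simp add: U_def sum_ennreal atLeast0LessThan)
  also have "(\<Sum>i\<in>{0..<card \<U>}. diameter (h i) powr s) = (\<Sum>U\<in>\<U>. diameter U powr s)"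
    by (rule sum.reindex_bij_betw[OF h])
  also have "ennreal (\<Sum>U\<in>\<U>. diameter U powr s) \<le> ennreal S"
    using \<U>(4) by (rule ennreal_leI)
  finally show ?thesis .
qed

lemma hausdorff_measure_eq_0_if_fin_cover_bound:
  assumes "\<And>\<delta> \<epsilon>. 0 < \<delta> \<Longrightarrow> 0 < \<epsilon> \<Longrightarrow> fin_cover_bound s \<delta> A \<epsilon>"
  shows "hausdorff_measure s A = 0"
proof -
  have "hausdorff_pre s \<delta> A = 0" if "0 < \<delta>" for \<delta>
  proof (rule antisym[OF ennreal_le_epsilon zero_le])
    fix \<epsilon> :: real assume "0 < \<epsilon>"
    then show "hausdorff_pre s \<delta> A \<le> 0 + ennreal \<epsilon>"
      using hausdorff_pre_le_fin_cover_bound assms that by simp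
  qed
  then show ?thesis
    unfolding hausdorff_measure_def by (simp add: SUP_cong[OF refl, of "{0<..}" _ "\<lambda>_. 0"])
qed

lemma hausdorff_measure_pos_if_cover_sums_ge:
  assumes "0 < t" and "t \<le> s" and "0 < c"
    and cover: "\<And>U :: nat \<Rightarrow> real set. A \<subseteq> (\<Union>i. U i) \<Longrightarrow> (\<forall>i. bounded (U i)) \<Longrightarrow>
                  ennreal c \<le> (\<Sum>i. ennreal (diameter (U i) powr s))"
  shows "hausdorff_measure t A \<noteq> 0"
proof -
  have "ennreal c \<le> hausdorff_pre t 1 A"
    unfolding hausdorff_pre_def
  proof (rule INF_greatest, clarify)
    fix U :: "nat \<Rightarrow> real set" assume U: "A \<subseteq> (\<Union>i. U i)" "\<forall>i. bounded (U i) \<and> diameter (U i) \<le> 1"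
    have "ennreal c \<le> (\<Sum>i. ennreal (diameter (U i) powr s))"
      using cover U by blast
    also have "\<dots> \<le> (\<Sum>i. ennreal (diameter (U i) powr t))"
      using U(2) assms(1,2) by (intro suminf_le ennreal_leI powr_mono') (auto simp: diameter_ge_0)
    finally show "ennreal c \<le> (\<Sum>i. ennreal (diameter (U i) powr t))" .
  qed
  also have "\<dots> \<le> hausdorff_measure t A"
    unfolding hausdorff_measure_def by (rule SUP_upper) simp
  finally show ?thesis
    using assms(3) by (auto simp: ennreal_eq_0_iff)
qed

lemma hausdorff_dim_eqI:
  assumes "0 \<le> s"
    and "\<And>t. s < t \<Longrightarrow> hausdorff_measure t A = 0"
    and "\<And>t. 0 < t \<Longrightarrow> t \<le> s \<Longrightarrow> hausdorff_measure t A \<noteq> 0"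
  shows "hausdorff_dim A = s"
proof -
  have "0 < t \<and> hausdorff_measure t A = 0 \<longleftrightarrow> s < t" for t
    using assms(1) assms(2)[of t] assms(3)[of t] by (cases "s < t") auto
  then have "{t. 0 < t \<and> hausdorff_measure t A = 0} = {s<..}"
    by auto
  then show ?thesis
    unfolding hausdorff_dim_def by simp
qed

lemma hausdorff_measure_subset_cantor_ranges_eq_0:
  fixes b b' t :: real
  assumes "1 < b" and "1 < b'" and "0 < t" and "2 < b powr t" and "2 < b' powr t"
    and "A \<subseteq> range (cantor_map b) \<union> range (cantor_map b')"
  shows "hausdorff_measure t A = 0"
proof (rule hausdorff_measure_eq_0_if_fin_cover_bound)
  fix \<delta> \<epsilon> :: real assume "0 < \<delta>" and "0 < \<epsilon>"
  then have "fin_cover_bound t \<delta> (range (cantor_map b) \<union> range (cantor_map b')) (\<epsilon> / 2 + \<epsilon> / 2)"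
    using assms by (intro fin_cover_bound_Un fin_cover_bound_range_cantor_map) auto
  then show "fin_cover_bound t \<delta> A \<epsilon>"
    using assms(6) by (rule fin_cover_bound_mono) auto
qed

lemma hausdorff_dim_subset_cantor_ranges:
  fixes b b' s c :: real
  assumes b: "2 \<le> b" "b powr s = 2" and "b < b'" and s: "0 < s"
    and A: "A \<subseteq> range (cantor_map b) \<union> range (cantor_map b')" and "0 < c"
    and cover: "\<And>U :: nat \<Rightarrow> real set. A \<subseteq> (\<Union>i. U i) \<Longrightarrow> (\<forall>i. bounded (U i)) \<Longrightarrow>
                  ennreal c \<le> (\<Sum>i. ennreal (diameter (U i) powr s))"
  shows "hausdorff_dim A = s"
proof (rule hausdorff_dim_eqI)
  show "hausdorff_measure t A = 0" if "s < t" for t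
  proof -
    have "b powr s < b powr t"
      using that b(1) by (intro powr_less_mono) auto
    moreover have "b powr t < b' powr t"
      using that s b(1) \<open>b < b'\<close> by (intro powr_less_mono2) auto
    ultimately show ?thesis
      using b \<open>b < b'\<close> s that A by (intro hausdorff_measure_subset_cantor_ranges_eq_0[of b b']) auto
  qed
  show "hausdorff_measure t A \<noteq> 0" if "0 < t" and "t \<le> s" for t
    by (rule hausdorff_measure_pos_if_cover_sums_ge[OF that \<open>0 < c\<close> cover])
qed (use s in simp)

section \<open>Covers by rational intervals\<close>

definition rat_intervals_union :: "(nat \<Rightarrow> rat \<times> rat) \<Rightarrow> real set" where
  "rat_intervals_union c = (\<Union>n. {of_rat (fst (c n)) <..< of_rat (snd (c n))})"

(* A reversed interval is empty and contributes 0, as ennreal truncates negative reals. *)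
definition rat_intervals_length :: "(nat \<Rightarrow> rat \<times> rat) \<Rightarrow> ennreal" where
  "rat_intervals_length c = (\<Sum>n. ennreal (of_rat (snd (c n)) - of_rat (fst (c n))))"

lemma emeasure_rat_intervals_union_le: "emeasure lborel (rat_intervals_union c) \<le> rat_intervals_length c"
proof -
  have "emeasure lborel (rat_intervals_union c) \<le>
          (\<Sum>n. emeasure lborel {of_rat (fst (c n)) <..< of_rat (snd (c n)) :: real})"
    unfolding rat_intervals_union_def by (rule emeasure_subadditive_countably) auto
  also have "\<dots> \<le> rat_intervals_length c"
    unfolding rat_intervals_length_def
  proof (rule suminf_le)
    show "emeasure lborel {of_rat (fst (c n)) <..< of_rat (snd (c n)) :: real}
            \<le> ennreal (of_rat (snd (c n)) - of_rat (fst (c n)))" for n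
      by (cases "of_rat (fst (c n)) \<le> (of_rat (snd (c n)) :: real)") auto
  qed auto
  finally show ?thesis .
qed

lemma unit_interval_not_covered:
  assumes "rat_intervals_length c < 1" and "countable K"
  obtains x where "x \<in> {0..<1}" and "x \<notin> rat_intervals_union c" and "x \<notin> K"
proof -
  have "\<not> {0..<1} - rat_intervals_union c \<subseteq> K"
  proof
    assume "{0..<1} - rat_intervals_union c \<subseteq> K"
    then have null: "emeasure lborel ({0..<1} - rat_intervals_union c) = 0"
      using assms(2) by (intro emeasure_lborel_countable) (rule countable_subset)
    have meas: "rat_intervals_union c \<in> sets lborel"
      unfolding rat_intervals_union_def by auto
    have "emeasure lborel {0..<1 :: real} \<le>
            emeasure lborel (rat_intervals_union c \<union> ({0..<1} - rat_intervals_union c))"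
      using meas by (intro emeasure_mono) auto
    also have "\<dots> \<le> emeasure lborel (rat_intervals_union c) + emeasure lborel ({0..<1} - rat_intervals_union c)"
      using meas by (intro emeasure_subadditive) auto
    also have "\<dots> < 1"
      using null emeasure_rat_intervals_union_le[of c] assms(1) by simp
    finally show False
      by simp
  qed
  then show ?thesis
    using that by blast
qed

lemma rat_interval_around:
  fixes x r e :: real
  assumes "0 < e"
  obtains p q :: rat where "{x - r..x + r} \<subseteq> {of_rat p <..< of_rat q}" and "of_rat q - of_rat p \<le> 2 * r + e"
proof -
  obtain p where p: "x - r - e / 2 < of_rat p" "of_rat p < x - r"
    using of_rat_dense[of "x - r - e / 2" "x - r"] assms by auto
  obtain q where q: "x + r < of_rat q" "of_rat q < x + r + e / 2"
    using of_rat_dense[of "x + r" "x + r + e / 2"] assms by auto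
  show ?thesis
    using p q by (intro that[of p q]) auto
qed

lemma geometric_quarter_sum: "(\<Sum>i. ennreal ((1 / 2) ^ i / 4)) = ennreal (1 / 2)"
proof -
  have "(\<lambda>i. (1 / 2 :: real) ^ i / 4) sums ((1 / (1 - 1 / 2)) / 4)"
    by (intro sums_divide geometric_sums) simp
  then have "(\<lambda>i. ennreal ((1 / 2) ^ i / 4)) sums ennreal (1 / 2)"
    by (intro sums_ennreal[THEN iffD2]) simp_all
  then show ?thesis
    by (rule sums_unique[symmetric])
qed

lemma holder_preimage_rat_interval:
  fixes \<phi> \<psi> :: "'d \<Rightarrow> real"
  assumes holder: "\<And>d d'. \<bar>\<psi> d - \<psi> d'\<bar> \<le> C * \<bar>\<phi> d - \<phi> d'\<bar> powr s"
    and "0 \<le> C" and "0 < s" and "bounded U" and "0 < e"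
  shows "\<exists>p q :: rat. (\<forall>d. \<phi> d \<in> U \<longrightarrow> \<psi> d \<in> {of_rat p <..< of_rat q}) \<and>
                      of_rat q - of_rat p \<le> 2 * (C * diameter U powr s) + e"
proof -
  define d\<^sub>0 where "d\<^sub>0 = (SOME d. \<phi> d \<in> U)"
  have near: "\<psi> d \<in> {\<psi> d\<^sub>0 - C * diameter U powr s..\<psi> d\<^sub>0 + C * diameter U powr s}" if "\<phi> d \<in> U" for d
  proof -
    have "\<phi> d\<^sub>0 \<in> U"
      unfolding d\<^sub>0_def using that by (rule someI)
    then have "\<bar>\<phi> d - \<phi> d\<^sub>0\<bar> \<le> diameter U"
      using diameter_bounded_bound[OF assms(4) that] by (simp add: dist_real_def)
    then have "C * \<bar>\<phi> d - \<phi> d\<^sub>0\<bar> powr s \<le> C * diameter U powr s"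
      using assms(2,3) by (intro mult_left_mono powr_mono2) auto
    then show ?thesis
      using holder[of d d\<^sub>0] by auto
  qed
  obtain p q where "{\<psi> d\<^sub>0 - C * diameter U powr s..\<psi> d\<^sub>0 + C * diameter U powr s} \<subseteq> {of_rat p <..< of_rat q}"
    and "of_rat q - of_rat p \<le> 2 * (C * diameter U powr s) + e"
    by (rule rat_interval_around[where x = "\<psi> d\<^sub>0" and r = "C * diameter U powr s", OF assms(5)]) auto
  with near show ?thesis
    by blast
qed

lemma holder_cover_to_rat_intervals:
  fixes \<phi> \<psi> :: "'d \<Rightarrow> real" and U :: "nat \<Rightarrow> real set"
  assumes holder: "\<And>d d'. \<bar>\<psi> d - \<psi> d'\<bar> \<le> C * \<bar>\<phi> d - \<phi> d'\<bar> powr s"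
    and "0 < C" and "0 < s" and bounded: "\<And>i. bounded (U i)"
  obtains c where "\<And>d. \<phi> d \<in> (\<Union>i. U i) \<Longrightarrow> \<psi> d \<in> rat_intervals_union c"
    and "rat_intervals_length c \<le> ennreal (2 * C) * (\<Sum>i. ennreal (diameter (U i) powr s)) + ennreal (1 / 2)"
proof -
  define a where "a i = diameter (U i) powr s" for i
  have "\<forall>i. \<exists>pq. (\<forall>d. \<phi> d \<in> U i \<longrightarrow> \<psi> d \<in> {of_rat (fst pq) <..< of_rat (snd pq)}) \<and>
              of_rat (snd pq) - of_rat (fst pq) \<le> 2 * (C * a i) + (1 / 2) ^ i / 4"
    using holder_preimage_rat_interval[where \<phi> = \<phi> and \<psi> = \<psi>, OF holder _ assms(3) bounded]
      assms(2)
    unfolding a_def by (simp add: split_paired_Ex)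
  from choice[OF this] obtain c where "\<forall>i. (\<forall>d. \<phi> d \<in> U i \<longrightarrow> \<psi> d \<in> {of_rat (fst (c i)) <..< of_rat (snd (c i))}) \<and>
              of_rat (snd (c i)) - of_rat (fst (c i)) \<le> 2 * (C * a i) + (1 / 2) ^ i / 4"
    by blast
  then have c: "\<And>i d. \<phi> d \<in> U i \<Longrightarrow> \<psi> d \<in> {of_rat (fst (c i)) <..< of_rat (snd (c i))}"
    "\<And>i. of_rat (snd (c i)) - of_rat (fst (c i)) \<le> 2 * (C * a i) + (1 / 2) ^ i / 4"
    by auto
  show ?thesis
  proof
    show "\<psi> d \<in> rat_intervals_union c" if "\<phi> d \<in> (\<Union>i. U i)" for d
      using that c(1) unfolding rat_intervals_union_def by blast
    have "ennreal (of_rat (snd (c i)) - of_rat (fst (c i)))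
            \<le> ennreal (2 * C) * ennreal (a i) + ennreal ((1 / 2) ^ i / 4)" for i
    proof -
      have "ennreal (2 * C) * ennreal (a i) + ennreal ((1 / 2) ^ i / 4) =
              ennreal (2 * (C * a i) + (1 / 2) ^ i / 4)"
        using assms(2) by (simp add: a_def ennreal_mult ennreal_plus mult.assoc)
      then show ?thesis
        using c(2)[of i] by (simp add: ennreal_leI)
    qed
    then have "rat_intervals_length c \<le> (\<Sum>i. ennreal (2 * C) * ennreal (a i) + ennreal ((1 / 2) ^ i / 4))"
      unfolding rat_intervals_length_def by (intro suminf_le) auto
    also have "\<dots> = (\<Sum>i. ennreal (2 * C) * ennreal (a i)) + (\<Sum>i. ennreal ((1 / 2) ^ i / 4))"
      by (rule suminf_add[symmetric]) auto
    also have "\<dots> = ennreal (2 * C) * (\<Sum>i. ennreal (a i)) + ennreal (1 / 2)"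
      by (simp add: ennreal_suminf_cmult geometric_quarter_sum)
    finally show "rat_intervals_length c \<le> ennreal (2 * C) * (\<Sum>i. ennreal (diameter (U i) powr s)) + ennreal (1 / 2)"
      unfolding a_def .
  qed
qed

lemma inj_seq_to_real: "\<exists>enc :: (nat \<Rightarrow> 'a :: countable) \<Rightarrow> real. inj enc"
proof -
  define g where "g f = (\<lambda>k. case prod_decode k of (i, j) \<Rightarrow> to_nat (f i) = j)" for f :: "nat \<Rightarrow> 'a"
  have "inj g"
  proof (rule injI, rule ext)
    fix f f' i assume "g f = g f'"
    then have "g f (prod_encode (i, to_nat (f i))) = g f' (prod_encode (i, to_nat (f i)))"
      by simp
    then show "f i = f' i"
      unfolding g_def by simp
  qed
  then have "inj (cantor_map 3 \<circ> g)"
    using inj_cantor_map[of 3] by (intro inj_compose) simp_all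
  then show ?thesis
    by blast
qed

section \<open>The transfinite construction\<close>

lemma exists_point_avoiding_cover_and_span:
  fixes \<phi> \<psi> :: "'d \<Rightarrow> real"
  assumes factor: "\<And>d d'. \<phi> d = \<phi> d' \<Longrightarrow> \<psi> d = \<psi> d'" and onto: "{0..<1} \<subseteq> range \<psi>"
    and "rat_intervals_length c < 1" and "countable S"
  shows "\<exists>d. \<psi> d \<notin> rat_intervals_union c \<and> \<phi> d \<notin> Q.span S"
proof -
  have "\<psi> ` (\<phi> -` Q.span S) \<subseteq> (\<lambda>z. \<psi> (SOME d. \<phi> d = z)) ` Q.span S"
  proof
    fix x assume "x \<in> \<psi> ` (\<phi> -` Q.span S)"
    then obtain d where "x = \<psi> d" and "\<phi> d \<in> Q.span S"
      by blast
    moreover have "\<psi> (SOME d'. \<phi> d' = \<phi> d) = \<psi> d"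
      by (rule factor, rule someI) (rule refl)
    ultimately show "x \<in> (\<lambda>z. \<psi> (SOME d. \<phi> d = z)) ` Q.span S"
      by (metis image_eqI)
  qed
  then have "countable (\<psi> ` (\<phi> -` Q.span S))"
    by (rule countable_subset) (simp add: Q.countable_span assms(4))
  with assms(3) obtain x where x: "x \<in> {0..<1}" "x \<notin> rat_intervals_union c" "x \<notin> \<psi> ` (\<phi> -` Q.span S)"
    by (rule unit_interval_not_covered)
  moreover obtain d where "\<psi> d = x"
    using onto x(1) by blast
  ultimately show ?thesis
    by blast
qed

lemma exists_independent_avoiding_small_covers:
  fixes \<phi> \<psi> :: "'d \<Rightarrow> real"
  assumes CH: "continuum_hypothesis"
    and factor: "\<And>d d'. \<phi> d = \<phi> d' \<Longrightarrow> \<psi> d = \<psi> d'"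
    and onto: "{0..<1} \<subseteq> range \<psi>"
  obtains Y where "\<not> Q.dependent (\<phi> ` Y)"
    and "\<And>c. rat_intervals_length c < 1 \<Longrightarrow> \<exists>d\<in>Y. \<psi> d \<notin> rat_intervals_union c"
proof -
  have "(card_of (UNIV :: real set), cardSuc natLeq) \<in> ordLeq"
    using CH unfolding continuum_hypothesis_def by (rule ordIso_imp_ordLeq)
  then obtain R :: "(real \<times> real) set" where R: "wf R" "\<And>x y. x \<noteq> y \<Longrightarrow> (x, y) \<in> R \<or> (y, x) \<in> R"
    "\<And>x. countable {y. (y, x) \<in> R}"
    by (rule wf_total_countable_predecessors) blast
  obtain enc :: "(nat \<Rightarrow> rat \<times> rat) \<Rightarrow> real" where "inj enc"
    using inj_seq_to_real by blast
  define cover where "cover i = (if rat_intervals_length (inv enc i) < 1 then inv enc i else (\<lambda>_. (0, 0)))" for i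
  have small: "rat_intervals_length (cover i) < 1" for i
    unfolding cover_def rat_intervals_length_def by simp
  \<comment> \<open>CH enters here: stage \<open>i\<close> has only countably many predecessors to avoid.\<close>
  have "\<exists>d. \<psi> d \<notin> rat_intervals_union (cover i) \<and> \<phi> d \<notin> Q.span (\<phi> ` f ` {j. (j, i) \<in> R})"
    for i and f :: "real \<Rightarrow> 'd"
    by (rule exists_point_avoiding_cover_and_span[OF _ onto small]) (erule factor, intro countable_image R(3))
  then obtain D where D: "\<And>i. \<psi> (D i) \<notin> rat_intervals_union (cover i) \<and>
                              \<phi> (D i) \<notin> Q.span (\<phi> ` D ` {j. (j, i) \<in> R})"
    by (rule wf_rec_choice[OF R(1), where P = "\<lambda>i S d. \<psi> d \<notin> rat_intervals_union (cover i) \<and> \<phi> d \<notin> Q.span (\<phi> ` S)"])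
       blast
  show ?thesis
  proof
    have "(\<phi> \<circ> D) i \<notin> Q.span ((\<phi> \<circ> D) ` {j. (j, i) \<in> R})" for i
      using D[of i] by (simp add: image_comp)
    with R(1,2) have "\<not> Q.dependent (range (\<phi> \<circ> D))"
      by (rule Q.independent_range_if_notin_span_predecessors)
    then show "\<not> Q.dependent (\<phi> ` range D)"
      by (simp add: image_comp)
    fix c assume "rat_intervals_length c < 1"
    then have "cover (enc c) = c"
      unfolding cover_def using \<open>inj enc\<close> by simp
    then show "\<exists>d\<in>range D. \<psi> d \<notin> rat_intervals_union c"
      using D[of "enc c"] by auto
  qed
qed

lemma cover_sums_lower_bound:
  fixes \<phi> \<psi> :: "'d \<Rightarrow> real" and U :: "nat \<Rightarrow> real set"
  assumes holder: "\<And>d d'. \<bar>\<psi> d - \<psi> d'\<bar> \<le> C * \<bar>\<phi> d - \<phi> d'\<bar> powr s" and C: "0 < C" and s: "0 < s"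
    and avoid: "\<And>c. rat_intervals_length c < 1 \<Longrightarrow> \<exists>d\<in>Y. \<psi> d \<notin> rat_intervals_union c"
    and cover: "\<phi> ` Y \<subseteq> (\<Union>i. U i)" and bounded: "\<And>i. bounded (U i)"
  shows "ennreal (1 / (8 * C)) \<le> (\<Sum>i. ennreal (diameter (U i) powr s))"
proof (rule ccontr)
  assume "\<not> ?thesis"
  then have small: "(\<Sum>i. ennreal (diameter (U i) powr s)) \<le> ennreal (1 / (8 * C))"
    by simp
  obtain c where c: "\<And>d. \<phi> d \<in> (\<Union>i. U i) \<Longrightarrow> \<psi> d \<in> rat_intervals_union c"
    and len: "rat_intervals_length c \<le> ennreal (2 * C) * (\<Sum>i. ennreal (diameter (U i) powr s)) + ennreal (1 / 2)"
    by (rule holder_cover_to_rat_intervals[where \<phi> = \<phi> and \<psi> = \<psi> and U = U, OF holder C s bounded]) blast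
  have "ennreal (2 * C) * ennreal (1 / (8 * C)) = ennreal (1 / 4)"
    using C by (simp add: ennreal_mult[symmetric])
  moreover have "ennreal (1 / 4) + ennreal (1 / 2) = ennreal (3 / 4)"
    using ennreal_plus[of "1 / 4" "1 / 2"] by simp
  moreover have "ennreal (2 * C) * (\<Sum>i. ennreal (diameter (U i) powr s)) + ennreal (1 / 2)
                   \<le> ennreal (2 * C) * ennreal (1 / (8 * C)) + ennreal (1 / 2)"
    using small by (intro add_right_mono mult_left_mono) auto
  ultimately have "rat_intervals_length c \<le> ennreal (3 / 4)"
    using len by simp
  then have "rat_intervals_length c < 1"
    by (simp add: le_less_trans)
  then obtain d where "d \<in> Y" and "\<psi> d \<notin> rat_intervals_union c"
    using avoid by blast
  with cover c show False
    by blast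
qed

lemma hamel_basis_with_cover_bound:
  fixes \<phi> \<psi> :: "'d \<Rightarrow> real"
  assumes CH: "continuum_hypothesis"
    and holder: "\<And>d d'. \<bar>\<psi> d - \<psi> d'\<bar> \<le> C * \<bar>\<phi> d - \<phi> d'\<bar> powr s" and C: "0 < C" and s: "0 < s"
    and onto: "{0..<1} \<subseteq> range \<psi>" and W: "range \<phi> \<subseteq> W" "Q.span W = UNIV"
  obtains B where "hamel_basis B" and "B \<subseteq> W"
    and "\<And>U :: nat \<Rightarrow> real set. B \<subseteq> (\<Union>i. U i) \<Longrightarrow> (\<forall>i. bounded (U i)) \<Longrightarrow>
           ennreal (1 / (8 * C)) \<le> (\<Sum>i. ennreal (diameter (U i) powr s))"
proof -
  have factor: "\<psi> d = \<psi> d'" if "\<phi> d = \<phi> d'" for d d'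
    using holder[of d d'] that s by simp
  obtain Y where Y: "\<not> Q.dependent (\<phi> ` Y)"
    and avoid: "\<And>c. rat_intervals_length c < 1 \<Longrightarrow> \<exists>d\<in>Y. \<psi> d \<notin> rat_intervals_union c"
    by (rule exists_independent_avoiding_small_covers[where \<phi> = \<phi>, OF CH factor onto]) blast+
  obtain B where B: "\<phi> ` Y \<subseteq> B" "B \<subseteq> W" "\<not> Q.dependent B" "W \<subseteq> Q.span B"
    by (rule Q.maximal_independent_subset_extend[of "\<phi> ` Y" W]) (use W(1) Y in auto)
  have "Q.span B = UNIV"
    using Q.span_minimal[OF B(4) Q.subspace_span] W(2) by auto
  then have "hamel_basis B"
    unfolding hamel_basis_def using B(3) by simp
  moreover have "ennreal (1 / (8 * C)) \<le> (\<Sum>i. ennreal (diameter (U i) powr s))"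
    if "B \<subseteq> (\<Union>i. U i)" and "\<forall>i. bounded (U i)" for U :: "nat \<Rightarrow> real set"
    using B(1) that by (intro cover_sums_lower_bound[where \<phi> = \<phi> and \<psi> = \<psi>, OF holder C s avoid]) auto
  ultimately show ?thesis
    using that B(2) by blast
qed

theorem theorem3p1:
  assumes "continuum_hypothesis"
  shows "\<forall>s::real. 0 < s \<and> s \<le> 1 \<longrightarrow> (\<exists>B. hamel_basis B \<and> hausdorff_dim B = s)"
proof (intro allI impI)
  fix s :: real assume "0 < s \<and> s \<le> 1"
  then have s: "0 < s" "1 \<le> 1 / s"
    by auto
  define b where "b = 2 powr (1 / s)"
  have b: "2 \<le> b" "b powr s = 2"
    unfolding b_def using s powr_mono[of 1 "1 / s" 2] by (simp_all add: powr_powr)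
  obtain C where C: "0 < C" "\<And>d d'. \<bar>cantor_map 2 d - cantor_map 2 d'\<bar> \<le> C * \<bar>cantor_map b d - cantor_map b d'\<bar> powr s"
    using cantor_map_holder[OF b] by blast
  define m where "m = nat \<lceil>b\<rceil> + 1"
  have m: "2 \<le> m" "b < real m"
    unfolding m_def using b(1) by linarith+
  define W where "W = range (cantor_map b) \<union> range (cantor_map (real m))"
  have "Q.span W = UNIV"
    using Q.span_mono[of "range (cantor_map (real m))" W] span_range_cantor_map[OF m(1)]
    unfolding W_def by auto
  obtain B where B: "hamel_basis B" "B \<subseteq> W"
    and cover: "\<And>U :: nat \<Rightarrow> real set. B \<subseteq> (\<Union>i. U i) \<Longrightarrow> (\<forall>i. bounded (U i)) \<Longrightarrow>
                  ennreal (1 / (8 * C)) \<le> (\<Sum>i. ennreal (diameter (U i) powr s))"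
    by (rule hamel_basis_with_cover_bound[OF assms C(2) C(1) s(1) range_binary_cantor_map _ \<open>Q.span W = UNIV\<close>])
       (simp add: W_def, blast)
  have "hausdorff_dim B = s"
    by (rule hausdorff_dim_subset_cantor_ranges[OF b m(2) s(1) _ _ cover]) (use B(2) C(1) in \<open>auto simp: W_def\<close>)
  with B(1) show "\<exists>B. hamel_basis B \<and> hausdorff_dim B = s"
    by blast
qed

end
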